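(* Let $N\ge2$, $d\in\mathbb{N}^*$, $\alpha>0$, $A\in\mathbb{R}_+^{N\times N}$, and let $\psi:\mathbb{R}_+\to\mathbb{R}_+$ satisfy $(r_1-r_2)(\psi(r_1)-\psi(r_2))\le0$ for all $r_1,r_2\ge0$ and $0<\psi(r)\le\psi(0)\le1$. Assume the hierarchical leadership condition: $A_{ij}>0$ only if $j<i$, and for all $i>1$ there exists $j<i$ with $A_{ij}>0$. Consider solutions on $\mathbb{R}_+$ of $$\frac{dx_i}{dt}=v_i,\qquad\frac{dv_i}{dt}=\alpha\sum_{j\ne i}Q_t(i,j)(v_j-v_i)$$ with either (CS) $Q_t(i,j)=A_{ij}\psi(\|x_j(t)-x_i(t)\|_2)$, or (MT) $Q_t(i,j)=\dfrac{A_{ij}\psi(\|x_i(t)-x_j(t)\|_2)}{a_i+\sum_{k\ne i}A_{ik}\psi(\|x_i(t)-x_k(t)\|_2)}$, where $a\in\mathbb{R}_+^N$ satisfies $a_i>0$ whenever $A_{ij}=0$ for all $j\ne i$. Then the solution flocks provided $$V(0)<C_{HL}\sup_{r\ge X(0)}(r-X(0))\psi(r)\quad\text{for (CS)},$$ $$V(0)<M_{HL}\sup_{r\ge X(0)}(r-X(0))\frac{(\bar a+A_* )\psi(r)}{\bar a+A_*\psi(r)}\quad\text{for (MT)},$$ where $A_*=\inf_{i>1}\sum_{j\ne i}A_{ij}$, $B_*=\inf_{i>1}\sum_{j\ne i}B_{ij}$ with $B_{ij}=\dfrac{A_{ij}}{a_i+\sum_{k\ne i}A_{ik}}$, $C_{HL}=\alpha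 A_*/H$, $M_{HL}=\alpha B_*/H$, and $\bar a=\sup_{i>1}a_i$. In particular, for (MT), if $\bar a=0$ the flocking is unconditional (occurs for every initial condition).
   Context: The interaction graph has vertices $\{1,\dots,N\}$ and an edge $i\to j$ iff $i\ne j$ and $A_{ij}>0$; the length of a path is its number of edges. For $i>1$, $h_i$ is the maximal length of a path from $i$ to $1$, and $H=\sup_{i>1}h_i$. $X(t)=\sup_{i,j}\|x_i(t)-x_j(t)\|_2$, $V(t)=\sup_{i,j}\|v_i(t)-v_j(t)\|_2$; flocking means $\sup_{t\ge0}X(t)<+\infty$ and $V(t)\to0$ as $t\to+\infty$. *)

theory Defs
  imports "HOL-Analysis.Analysis"
begin

text \<open>Agents are indexed by 1..N; the interaction matrix is A :: nat => nat => real.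
  Edge i -> j iff i ~= j and A i j > 0.\<close>

definition is_path_to_1 :: "(nat \<Rightarrow> nat \<Rightarrow> real) \<Rightarrow> nat \<Rightarrow> nat \<Rightarrow> nat list \<Rightarrow> bool" where
  "is_path_to_1 A N i p \<longleftrightarrow> p \<noteq> [] \<and> hd p = i \<and> last p = 1 \<and> set p \<subseteq> {1..N} \<and> distinct p
     \<and> (\<forall>k. Suc k < length p \<longrightarrow> p ! k \<noteq> p ! Suc k \<and> A (p ! k) (p ! Suc k) > 0)"

definition hlen :: "(nat \<Rightarrow> nat \<Rightarrow> real) \<Rightarrow> nat \<Rightarrow> nat \<Rightarrow> nat" where
  "hlen A N i = Max {length p - 1 | p. is_path_to_1 A N i p}"

definition Hdepth :: "(nat \<Rightarrow> nat \<Rightarrow> real) \<Rightarrow> nat \<Rightarrow> nat" where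
  "Hdepth A N = Max (hlen A N ` {2..N})"

definition Astar :: "(nat \<Rightarrow> nat \<Rightarrow> real) \<Rightarrow> nat \<Rightarrow> real" where
  "Astar A N = Min ((\<lambda>i. \<Sum>j\<in>{1..N} - {i}. A i j) ` {2..N})"

definition Bmat :: "(nat \<Rightarrow> nat \<Rightarrow> real) \<Rightarrow> (nat \<Rightarrow> real) \<Rightarrow> nat \<Rightarrow> nat \<Rightarrow> nat \<Rightarrow> real" where
  "Bmat A a N i j = A i j / (a i + (\<Sum>k\<in>{1..N} - {i}. A i k))"

definition Bstar :: "(nat \<Rightarrow> nat \<Rightarrow> real) \<Rightarrow> (nat \<Rightarrow> real) \<Rightarrow> nat \<Rightarrow> real" where
  "Bstar A a N = Min ((\<lambda>i. \<Sum>j\<in>{1..N} - {i}. Bmat A a N i j) ` {2..N})"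

definition abar :: "(nat \<Rightarrow> real) \<Rightarrow> nat \<Rightarrow> real" where
  "abar a N = Max (a ` {2..N})"

definition diam :: "nat \<Rightarrow> (nat \<Rightarrow> 'a::real_normed_vector) \<Rightarrow> real" where
  "diam N y = Max {norm (y i - y j) | i j. i \<in> {1..N} \<and> j \<in> {1..N}}"

definition Q_CS :: "(nat \<Rightarrow> nat \<Rightarrow> real) \<Rightarrow> (real \<Rightarrow> real) \<Rightarrow> (real \<Rightarrow> nat \<Rightarrow> 'a::real_normed_vector)
    \<Rightarrow> real \<Rightarrow> nat \<Rightarrow> nat \<Rightarrow> real" where
  "Q_CS A \<psi> x t i j = A i j * \<psi> (norm (x t j - x t i))"

definition Q_MT :: "(nat \<Rightarrow> nat \<Rightarrow> real) \<Rightarrow> (nat \<Rightarrow> real) \<Rightarrow> nat \<Rightarrow> (real \<Rightarrow> real)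
    \<Rightarrow> (real \<Rightarrow> nat \<Rightarrow> 'a::real_normed_vector) \<Rightarrow> real \<Rightarrow> nat \<Rightarrow> nat \<Rightarrow> real" where
  "Q_MT A a N \<psi> x t i j = A i j * \<psi> (norm (x t i - x t j))
      / (a i + (\<Sum>k\<in>{1..N} - {i}. A i k * \<psi> (norm (x t i - x t k))))"

definition solves :: "nat \<Rightarrow> real \<Rightarrow> (real \<Rightarrow> nat \<Rightarrow> nat \<Rightarrow> real)
    \<Rightarrow> (real \<Rightarrow> nat \<Rightarrow> 'a::real_normed_vector) \<Rightarrow> (real \<Rightarrow> nat \<Rightarrow> 'a) \<Rightarrow> bool" where
  "solves N \<alpha> Q x v \<longleftrightarrow> (\<forall>t\<ge>0. \<forall>i\<in>{1..N}.
      ((\<lambda>s. x s i) has_vector_derivative v t i) (at t within {0..}) \<and>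
      ((\<lambda>s. v s i) has_vector_derivative
          (\<alpha> *\<^sub>R (\<Sum>j\<in>{1..N} - {i}. Q t i j *\<^sub>R (v t j - v t i)))) (at t within {0..}))"

definition flocks :: "nat \<Rightarrow> (real \<Rightarrow> nat \<Rightarrow> 'a::real_normed_vector) \<Rightarrow> (real \<Rightarrow> nat \<Rightarrow> 'a) \<Rightarrow> bool" where
  "flocks N x v \<longleftrightarrow> bdd_above ((\<lambda>t. diam N (x t)) ` {0..})
      \<and> ((\<lambda>t. diam N (v t)) \<longlongrightarrow> 0) at_top"

end

theory Submission
  imports Defs
begin

text \<open>
  Suppose that, as long as the positions have diameter at most r, every follower i > 1 receives
  total coupling weight at least \<gamma> from agents of strictly lower depth. The leader 1 moves with
  constant velocity, and by induction on the depth l a comparison argument shows that the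
  velocity of an agent of depth l approaches the leader's at least as fast as
  E_l(t) = exp(-\<gamma> t) \<Sum>_{k<l} (\<gamma> t)^k / k!, the survival function of an Erlang(l, \<gamma>)
  distribution, because E_{l+1}' = \<gamma> (E_l - E_{l+1}). Hence V(t) \<le> V(0) E_H(t) \<longrightarrow> 0, and
  integrating, X(t) \<le> X(0) + H V(0) / \<gamma>. If this bound is smaller than r, a continuity argument
  shows that the diameter never reaches r, so both estimates hold for all time. For Cucker--Smale
  weights one can take \<gamma> = \<alpha> A_* \<psi>(r), for Motsch--Tadmor weights
  \<gamma> = \<alpha> B_* (a + A_*) \<psi>(r) / (a + A_* \<psi>(r)) with a the largest a_i, and the hypotheses of the
  theorem say precisely that some r \<ge> X(0) satisfies X(0) + H V(0) / \<gamma> < r.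
\<close>

section \<open>Erlang survival functions\<close>

definition erlang_survival :: "real \<Rightarrow> nat \<Rightarrow> real \<Rightarrow> real" where
  "erlang_survival \<gamma> k t = exp (- \<gamma> * t) * (\<Sum>l<k. (\<gamma> * t) ^ l / fact l)"

lemma erlang_survival_0 [simp]: "erlang_survival \<gamma> 0 t = 0"
  by (simp add: erlang_survival_def)

lemma erlang_survival_nonneg: "0 \<le> \<gamma> \<Longrightarrow> 0 \<le> t \<Longrightarrow> 0 \<le> erlang_survival \<gamma> k t"
  unfolding erlang_survival_def by (intro mult_nonneg_nonneg sum_nonneg) auto

lemma erlang_survival_mono:
  assumes "0 \<le> \<gamma>" "0 \<le> t" "k \<le> k'"
  shows "erlang_survival \<gamma> k t \<le> erlang_survival \<gamma> k' t"
  unfolding erlang_survival_def using assms by (intro mult_left_mono sum_mono2) auto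

lemma erlang_survival_at_0: "1 \<le> k \<Longrightarrow> erlang_survival \<gamma> k 0 = 1"
  by (cases k) (simp_all add: erlang_survival_def sum.lessThan_Suc_shift del: sum.lessThan_Suc)

lemma exp_partial_sum_has_derivative:
  "((\<lambda>t. \<Sum>l<Suc k. (\<gamma> * t) ^ l / fact l) has_real_derivative \<gamma> * (\<Sum>l<k. (\<gamma> * t) ^ l / fact l)) (at t)"
proof -
  have monomial: "((\<lambda>t. (\<gamma> * t) ^ Suc l / fact (Suc l)) has_real_derivative \<gamma> * ((\<gamma> * t) ^ l / fact l)) (at t)"
    for l
  proof (rule DERIV_cong)
    show "((\<lambda>t. (\<gamma> * t) ^ Suc l / fact (Suc l)) has_real_derivative
        real (Suc l) * (\<gamma> * t) ^ l * \<gamma> / fact (Suc l)) (at t)"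
      by (auto intro!: derivative_eq_intros simp del: power_Suc)
  qed (simp add: fact_Suc)
  have "((\<lambda>t. 1 + (\<Sum>l<k. (\<gamma> * t) ^ Suc l / fact (Suc l))) has_real_derivative
      0 + (\<Sum>l<k. \<gamma> * ((\<gamma> * t) ^ l / fact l))) (at t)"
    by (intro DERIV_add DERIV_const DERIV_sum monomial)
  then show ?thesis
    by (simp add: sum.lessThan_Suc_shift sum_distrib_left del: sum.lessThan_Suc)
qed

lemma erlang_survival_has_derivative:
  "(erlang_survival \<gamma> (Suc k) has_real_derivative
      \<gamma> * (erlang_survival \<gamma> k t - erlang_survival \<gamma> (Suc k) t)) (at t)"
proof -
  have "((\<lambda>t. exp (- \<gamma> * t) * (\<Sum>l<Suc k. (\<gamma> * t) ^ l / fact l)) has_real_derivative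
      exp (- \<gamma> * t) * - \<gamma> * (\<Sum>l<Suc k. (\<gamma> * t) ^ l / fact l)
      + \<gamma> * (\<Sum>l<k. (\<gamma> * t) ^ l / fact l) * exp (- \<gamma> * t)) (at t)"
    by (rule DERIV_mult[OF _ exp_partial_sum_has_derivative]) (auto intro!: derivative_eq_intros)
  then show ?thesis
    unfolding erlang_survival_def[abs_def] by (simp add: algebra_simps)
qed

lemma erlang_survival_tendsto_0:
  assumes "0 < \<gamma>"
  shows "(erlang_survival \<gamma> k \<longlongrightarrow> 0) at_top"
proof -
  have "filterlim (\<lambda>t. \<gamma> * t) at_top at_top"
    using assms by (intro filterlim_tendsto_pos_mult_at_top[OF tendsto_const]) (auto simp: filterlim_ident)
  then have "((\<lambda>t. (\<gamma> * t) ^ l / exp (\<gamma> * t)) \<longlongrightarrow> 0) at_top" for l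
    using tendsto_power_div_exp_0 filterlim_compose by blast
  then have "((\<lambda>t. \<Sum>l<k. (\<gamma> * t) ^ l / exp (\<gamma> * t) / fact l) \<longlongrightarrow> (\<Sum>l<k. 0 / fact l)) at_top"
    by (intro tendsto_sum tendsto_divide) auto
  moreover have "erlang_survival \<gamma> k = (\<lambda>t. \<Sum>l<k. (\<gamma> * t) ^ l / exp (\<gamma> * t) / fact l)"
    by (simp add: fun_eq_iff erlang_survival_def sum_distrib_left exp_minus field_simps)
  ultimately show ?thesis by simp
qed

text \<open>Divided by \<gamma>, this is the integral of \<open>erlang_survival \<gamma> H\<close> over [t, \<infinity>).\<close>
definition erlang_survival_sum :: "real \<Rightarrow> nat \<Rightarrow> real \<Rightarrow> real" where
  "erlang_survival_sum \<gamma> H t = (\<Sum>l<H. erlang_survival \<gamma> (Suc l) t)"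

lemma erlang_survival_sum_has_derivative:
  "(erlang_survival_sum \<gamma> H has_real_derivative - \<gamma> * erlang_survival \<gamma> H t) (at t)"
proof -
  have "(erlang_survival_sum \<gamma> H has_real_derivative
      (\<Sum>l<H. \<gamma> * (erlang_survival \<gamma> l t - erlang_survival \<gamma> (Suc l) t))) (at t)"
    unfolding erlang_survival_sum_def[abs_def] by (intro DERIV_sum erlang_survival_has_derivative)
  also have "(\<Sum>l<H. \<gamma> * (erlang_survival \<gamma> l t - erlang_survival \<gamma> (Suc l) t))
      = \<gamma> * (erlang_survival \<gamma> 0 t - erlang_survival \<gamma> H t)"
    by (simp only: sum_lessThan_telescope'[of "\<lambda>l. erlang_survival \<gamma> l t"] flip: sum_distrib_left)
  finally show ?thesis by simp
qed

lemma erlang_survival_sum_nonneg: "0 \<le> \<gamma> \<Longrightarrow> 0 \<le> t \<Longrightarrow> 0 \<le> erlang_survival_sum \<gamma> H t"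
  unfolding erlang_survival_sum_def by (intro sum_nonneg erlang_survival_nonneg)

lemma erlang_survival_sum_at_0: "erlang_survival_sum \<gamma> H 0 = H"
  by (simp add: erlang_survival_sum_def erlang_survival_at_0)

section \<open>Comparison and continuity arguments\<close>

lemma nonpos_if_deriv_nonpos_where_pos:
  fixes f f' :: "real \<Rightarrow> real"
  assumes deriv: "\<And>t. t \<in> {0..T} \<Longrightarrow> (f has_real_derivative f' t) (at t within {0..})"
    and start: "f 0 \<le> 0"
    and barrier: "\<And>t. t \<in> {0..T} \<Longrightarrow> 0 < f t \<Longrightarrow> f' t \<le> 0"
    and t: "t \<in> {0..T}"
  shows "f t \<le> 0"
proof (rule ccontr)
  assume ft: "\<not> f t \<le> 0"
  have "continuous (at s within {0..T}) f" if "s \<in> {0..T}" for s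
    using DERIV_continuous[OF deriv[OF that]] by (rule continuous_within_subset) auto
  then have "continuous_on {0..T} f"
    by (simp add: continuous_on_eq_continuous_within)
  then have cont: "continuous_on {0..t} f"
    using t by (auto intro: continuous_on_subset)
  define S where "S = {0..t} \<inter> f -` {..0}"
  have "closed S"
    unfolding S_def by (rule continuous_closed_preimage[OF cont]) auto
  moreover have "0 \<in> S" "bdd_above S"
    using start t by (auto simp: S_def)
  ultimately have "Sup S \<in> S"
    by (intro closed_contains_Sup) auto
  define t0 where "t0 = Sup S"
  have ft0: "f t0 \<le> 0" and t0: "0 \<le> t0" "t0 < t"
    using \<open>Sup S \<in> S\<close> ft by (auto simp: S_def t0_def less_le)
  have pos: "0 < f s" if "t0 < s" "s \<le> t" for s
    using cSup_upper[of s S] \<open>bdd_above S\<close> that t0 by (force simp: S_def t0_def)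
  have "f t \<le> f t0"
  proof (rule DERIV_nonpos_imp_decreasing_open[OF less_imp_le[OF \<open>t0 < t\<close>]])
    fix s assume s: "t0 < s" "s < t"
    then have "(f has_real_derivative f' s) (at s)"
      using deriv[of s] t t0 at_within_interior[of s "{0..}"] by auto
    moreover have "f' s \<le> 0"
      using barrier pos s t t0 by auto
    ultimately show "\<exists>y. (f has_real_derivative y) (at s) \<and> y \<le> 0" by blast
  qed (use cont t0 in \<open>auto intro: continuous_on_subset\<close>)
  then show False using ft ft0 by simp
qed

lemma continuous_bootstrap:
  fixes \<phi> :: "real \<Rightarrow> real"
  assumes cont: "continuous_on {0..} \<phi>" and start: "\<phi> 0 < r"
    and step: "\<And>T. 0 \<le> T \<Longrightarrow> \<forall>t\<in>{0..T}. \<phi> t \<le> r \<Longrightarrow> \<phi> T < r"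
    and t: "0 \<le> t"
  shows "\<phi> t < r"
proof (rule ccontr)
  assume "\<not> \<phi> t < r"
  define K where "K = {0..t} \<inter> \<phi> -` {r..}"
  have "closed K"
    unfolding K_def using cont by (intro continuous_closed_preimage) (auto intro: continuous_on_subset)
  moreover have "t \<in> K" "bdd_below K"
    using \<open>\<not> \<phi> t < r\<close> t by (auto simp: K_def)
  ultimately have "Inf K \<in> K"
    by (intro closed_contains_Inf) auto
  define s where "s = Inf K"
  have s: "0 \<le> s" "s \<le> t" "r \<le> \<phi> s"
    using \<open>Inf K \<in> K\<close> by (auto simp: K_def s_def)
  have before: "\<phi> u < r" if "0 \<le> u" "u < s" for u
    using cInf_lower[of u K] \<open>bdd_below K\<close> that s by (force simp: K_def s_def)
  have "continuous_on {0..s} \<phi>"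
    using cont by (rule continuous_on_subset) auto
  then obtain u where u: "0 \<le> u" "u \<le> s" "\<phi> u = r"
    using IVT'[of \<phi> 0 r s] start s by auto
  then have "\<phi> s = r"
    using before[of u] by (cases "u = s") auto
  then have "\<forall>u\<in>{0..s}. \<phi> u \<le> r"
    using before by (auto simp: le_less)
  then show False
    using step[of s] s \<open>\<phi> s = r\<close> by simp
qed

lemma diam_eq_Max: "diam N y = Max ((\<lambda>(i, j). norm (y i - y j)) ` ({1..N} \<times> {1..N}))"
  unfolding diam_def by (rule arg_cong[where f = Max]) (auto; blast)

lemma norm_le_diam: "i \<in> {1..N} \<Longrightarrow> j \<in> {1..N} \<Longrightarrow> norm (y i - y j) \<le> diam N y"
  unfolding diam_eq_Max by (rule Max_ge) auto

lemma diam_le: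
  "1 \<le> N \<Longrightarrow> (\<And>i j. i \<in> {1..N} \<Longrightarrow> j \<in> {1..N} \<Longrightarrow> norm (y i - y j) \<le> c) \<Longrightarrow> diam N y \<le> c"
  unfolding diam_eq_Max by (subst Max_le_iff) auto

lemma diam_nonneg: "1 \<le> N \<Longrightarrow> 0 \<le> diam N y"
  using norm_le_diam[of 1 N 1 y] by simp

lemma continuous_on_Max:
  fixes f :: "'i \<Rightarrow> 'a::topological_space \<Rightarrow> 'b::linorder_topology"
  assumes "finite I" "I \<noteq> {}" "\<And>i. i \<in> I \<Longrightarrow> continuous_on S (f i)"
  shows "continuous_on S (\<lambda>t. Max ((\<lambda>i. f i t) ` I))"
  using assms by (induction I rule: finite_ne_induct) (auto intro: continuous_on_max)

lemma continuous_on_diam: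
  assumes "1 \<le> N" "\<And>i. i \<in> {1..N} \<Longrightarrow> continuous_on S (\<lambda>t. y t i)"
  shows "continuous_on S (\<lambda>t. diam N (y t))"
  unfolding diam_eq_Max
  using continuous_on_Max[of "{1..N} \<times> {1..N}" S "\<lambda>(i, j) t. norm (y t i - y t j)"] assms
  by (force simp: image_image case_prod_beta intro: continuous_intros)

lemma diam_le_of_velocity_decay:
  fixes x v :: "real \<Rightarrow> nat \<Rightarrow> 'a::real_normed_vector"
  assumes N: "1 \<le> N"
    and dx: "\<And>t i. 0 \<le> t \<Longrightarrow> i \<in> {1..N} \<Longrightarrow> ((\<lambda>s. x s i) has_vector_derivative v t i) (at t within {0..})"
    and \<gamma>: "0 < \<gamma>" and V: "0 \<le> V"
    and decay: "\<And>t. t \<in> {0..\<tau>} \<Longrightarrow> diam N (v t) \<le> V * erlang_survival \<gamma> H t"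
    and \<tau>: "0 \<le> \<tau>"
  shows "diam N (x \<tau>) \<le> diam N (x 0) + H * V / \<gamma>"
proof (rule diam_le[OF N])
  fix i j assume ij: "i \<in> {1..N}" "j \<in> {1..N}"
  define f where "f s = x s i - x s j" for s
  define \<phi> where "\<phi> s = - (V / \<gamma>) * erlang_survival_sum \<gamma> H s" for s
  have "norm (f \<tau> - f 0) \<le> \<phi> \<tau> - \<phi> 0"
  proof (cases "\<tau> = 0")
    case False
    have df: "(f has_vector_derivative v t i - v t j) (at t within {0..})" if "0 \<le> t" for t
      unfolding f_def using dx ij that by (intro derivative_intros) auto
    have d\<phi>: "(\<phi> has_vector_derivative V * erlang_survival \<gamma> H t) (at t)" for t
      unfolding \<phi>_def[abs_def] has_real_derivative_iff_has_vector_derivative[symmetric]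
      using \<gamma> by (auto intro!: derivative_eq_intros erlang_survival_sum_has_derivative)
    show ?thesis
    proof (rule differentiable_bound_general[where f' = "\<lambda>t. v t i - v t j"])
      show "0 < \<tau>" using \<tau> False by simp
      have "continuous_on {0..} f"
        using df by (intro continuous_on_vector_derivative) auto
      then show "continuous_on {0..\<tau>} f"
        by (rule continuous_on_subset) auto
      show "continuous_on {0..\<tau>} \<phi>"
        using d\<phi> by (intro continuous_at_imp_continuous_on ballI has_vector_derivative_continuous)
      fix t assume t: "0 < t" "t < \<tau>"
      then show "(f has_vector_derivative v t i - v t j) (at t)"
        using df[of t] at_within_interior[of t "{0..}"] by simp
      show "(\<phi> has_vector_derivative V * erlang_survival \<gamma> H t) (at t)"
        by (rule d\<phi>)
      have "norm (v t i - v t j) \<le> diam N (v t)"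
        using ij by (rule norm_le_diam)
      also have "\<dots> \<le> V * erlang_survival \<gamma> H t"
        using decay t by simp
      finally show "norm (v t i - v t j) \<le> V * erlang_survival \<gamma> H t" .
    qed
  qed simp
  also have "\<phi> \<tau> - \<phi> 0 = H * V / \<gamma> - V / \<gamma> * erlang_survival_sum \<gamma> H \<tau>"
    by (simp add: \<phi>_def erlang_survival_sum_at_0 algebra_simps)
  also have "\<dots> \<le> H * V / \<gamma>"
    using erlang_survival_sum_nonneg[of \<gamma> \<tau> H] \<gamma> V \<tau> by simp
  finally have "norm (f \<tau> - f 0) \<le> H * V / \<gamma>" .
  moreover have "norm (x 0 i - x 0 j) \<le> diam N (x 0)"
    using ij by (rule norm_le_diam)
  moreover have "x \<tau> i - x \<tau> j = (x 0 i - x 0 j) + (f \<tau> - f 0)"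
    by (simp add: f_def)
  ultimately show "norm (x \<tau> i - x \<tau> j) \<le> diam N (x 0) + H * V / \<gamma>"
    by (metis add_mono norm_triangle_ineq order_trans)
qed

lemma sum_weighted_le_of_nonpos:
  fixes w d :: "'i \<Rightarrow> real"
  assumes "\<And>j. j \<in> S \<Longrightarrow> 0 \<le> w j" and "\<And>j. j \<in> S \<Longrightarrow> w j \<noteq> 0 \<Longrightarrow> d j \<le> D"
    and "D \<le> 0" and "\<gamma> \<le> sum w S"
  shows "(\<Sum>j\<in>S. w j * d j) \<le> \<gamma> * D"
proof -
  have "(\<Sum>j\<in>S. w j * d j) \<le> (\<Sum>j\<in>S. w j * D)"
    using assms(1,2) by (intro sum_mono) (metis mult_left_mono mult_zero_left)
  also have "\<dots> = sum w S * D"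
    by (simp add: sum_distrib_right)
  also have "\<dots> \<le> \<gamma> * D"
    by (rule mult_right_mono_neg[OF assms(4) assms(3)])
  finally show ?thesis .
qed

section \<open>Linear consensus systems with layered weights\<close>

locale layered_coupling =
  fixes N :: nat and W :: "real \<Rightarrow> nat \<Rightarrow> nat \<Rightarrow> real" and L :: "nat \<Rightarrow> nat"
  assumes N_pos: "1 \<le> N"
    and weight_nonneg: "\<And>t i j. 0 \<le> t \<Longrightarrow> i \<in> {1..N} \<Longrightarrow> j \<in> {1..N} \<Longrightarrow> 0 \<le> W t i j"
    and weight_level: "\<And>t i j. 0 \<le> t \<Longrightarrow> i \<in> {1..N} \<Longrightarrow> j \<in> {1..N} \<Longrightarrow> W t i j \<noteq> 0 \<Longrightarrow> L j < L i"
    and leader_level: "L 1 = 0"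
begin

definition consensus_trajectory :: "(real \<Rightarrow> nat \<Rightarrow> 'a::real_normed_vector) \<Rightarrow> bool" where
  "consensus_trajectory u \<longleftrightarrow> (\<forall>t\<ge>0. \<forall>i\<in>{1..N}.
     ((\<lambda>s. u s i) has_vector_derivative (\<Sum>j\<in>{1..N} - {i}. W t i j *\<^sub>R (u t j - u t i)))
       (at t within {0..}))"

lemma consensus_trajectory_bounded_linear:
  assumes f: "bounded_linear f" and u: "consensus_trajectory u"
  shows "consensus_trajectory (\<lambda>t k. f (u t k))"
proof -
  interpret f: bounded_linear f by (fact f)
  show ?thesis
    unfolding consensus_trajectory_def
  proof (intro allI impI ballI)
    fix t :: real and i assume "0 \<le> t" "i \<in> {1..N}"
    then have "((\<lambda>s. u s i) has_vector_derivative
        (\<Sum>j\<in>{1..N} - {i}. W t i j *\<^sub>R (u t j - u t i))) (at t within {0..})"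
      using u unfolding consensus_trajectory_def by blast
    then have "((\<lambda>s. f (u s i)) has_vector_derivative
        f (\<Sum>j\<in>{1..N} - {i}. W t i j *\<^sub>R (u t j - u t i))) (at t within {0..})"
      by (rule f.has_vector_derivative)
    then show "((\<lambda>s. f (u s i)) has_vector_derivative
        (\<Sum>j\<in>{1..N} - {i}. W t i j *\<^sub>R (f (u t j) - f (u t i)))) (at t within {0..})"
      by (simp add: f.sum f.scaleR f.diff)
  qed
qed

lemma consensus_trajectory_real_derivative:
  fixes u :: "real \<Rightarrow> nat \<Rightarrow> real"
  assumes "consensus_trajectory u" "0 \<le> t" "i \<in> {1..N}"
  shows "((\<lambda>s. u s i) has_real_derivative (\<Sum>j\<in>{1..N} - {i}. W t i j * (u t j - u t i)))
    (at t within {0..})"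
  using assms by (simp add: consensus_trajectory_def has_real_derivative_iff_has_vector_derivative)

lemma leader_constant:
  assumes u: "consensus_trajectory u" and t: "0 \<le> t"
  shows "u t 1 = u 0 1"
proof -
  have "((\<lambda>s. u s 1) has_vector_derivative 0) (at s within {0..})" if "s \<in> {0..}" for s
  proof -
    have "W s 1 j = 0" if "j \<in> {1..N}" for j
      using weight_level[of s 1 j] leader_level N_pos \<open>s \<in> {0..}\<close> that by auto
    then have "(\<Sum>j\<in>{1..N} - {1}. W s 1 j *\<^sub>R (u s j - u s 1)) = 0"
      by (intro sum.neutral) auto
    moreover have "((\<lambda>s. u s 1) has_vector_derivative
        (\<Sum>j\<in>{1..N} - {1}. W s 1 j *\<^sub>R (u s j - u s 1))) (at s within {0..})"
      using u N_pos that unfolding consensus_trajectory_def by simp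
    ultimately show ?thesis by simp
  qed
  then obtain c where "\<And>s. s \<in> {0..} \<Longrightarrow> u s 1 = c"
    by (rule has_vector_derivative_zero_constant[rotated]) auto
  then show ?thesis using t by simp
qed

lemma follower_upper_bound_step:
  fixes u :: "real \<Rightarrow> nat \<Rightarrow> real"
  assumes u: "consensus_trajectory u" and \<gamma>: "0 < \<gamma>"
    and i: "i \<in> {1..N}" "L i \<le> Suc k"
    and coupling: "\<And>t. t \<in> {0..T} \<Longrightarrow> \<gamma> \<le> (\<Sum>j\<in>{1..N} - {i}. W t i j)"
    and start: "u 0 i \<le> M" and c: "c \<le> M"
    and below: "\<And>t j. t \<in> {0..T} \<Longrightarrow> j \<in> {1..N} \<Longrightarrow> L j \<le> k \<Longrightarrow>
        u t j - c \<le> (M - c) * erlang_survival \<gamma> k t"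
    and \<tau>: "\<tau> \<in> {0..T}"
  shows "u \<tau> i - c \<le> (M - c) * erlang_survival \<gamma> (Suc k) \<tau>"
proof -
  define E where "E = erlang_survival \<gamma>"
  define f where "f t = u t i - c - (M - c) * E (Suc k) t" for t
  define f' where "f' t = (\<Sum>j\<in>{1..N} - {i}. W t i j * (u t j - u t i))
      - (M - c) * (\<gamma> * (E k t - E (Suc k) t))" for t
  txt \<open>Above the envelope, every neighbour of i lies below the envelope of level k, so the
    coupling pulls \<open>u _ i\<close> down at rate at least \<gamma>.\<close>
  have "f \<tau> \<le> 0"
  proof (rule nonpos_if_deriv_nonpos_where_pos[of T f f'])
    fix t assume t: "t \<in> {0..T}"
    show "(f has_real_derivative f' t) (at t within {0..})"
      unfolding f_def[abs_def] f'_def E_def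
      using consensus_trajectory_real_derivative[OF u _ i(1), of t] t
      by (auto intro!: derivative_eq_intros has_field_derivative_at_within[OF erlang_survival_has_derivative])
    assume "0 < f t"
    have "(M - c) * E k t \<le> (M - c) * E (Suc k) t"
      unfolding E_def using \<gamma> t c by (intro mult_left_mono erlang_survival_mono) auto
    then have D: "(M - c) * E k t - (u t i - c) \<le> 0"
      using \<open>0 < f t\<close> by (simp add: f_def)
    have "(\<Sum>j\<in>{1..N} - {i}. W t i j * (u t j - u t i)) \<le> \<gamma> * ((M - c) * E k t - (u t i - c))"
    proof (rule sum_weighted_le_of_nonpos[OF _ _ D coupling[OF t]])
      fix j assume j: "j \<in> {1..N} - {i}"
      then show "0 \<le> W t i j" using weight_nonneg i t by auto
      assume "W t i j \<noteq> 0"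
      then have "L j \<le> k" using weight_level[of t i j] i j t by auto
      then show "u t j - u t i \<le> (M - c) * E k t - (u t i - c)"
        using below[OF t, of j] j by (auto simp: E_def)
    qed
    then have "f' t \<le> \<gamma> * ((M - c) * E k t - (u t i - c)) - (M - c) * (\<gamma> * (E k t - E (Suc k) t))"
      unfolding f'_def by linarith
    also have "\<dots> = - \<gamma> * f t"
      by (simp add: f_def algebra_simps)
    also have "\<dots> \<le> 0"
      using \<gamma> \<open>0 < f t\<close> by simp
    finally show "f' t \<le> 0" .
  qed (use start \<tau> in \<open>simp_all add: f_def E_def erlang_survival_at_0\<close>)
  then show ?thesis by (simp add: f_def E_def)
qed

lemma consensus_upper_bound:
  fixes u :: "real \<Rightarrow> nat \<Rightarrow> real"
  assumes u: "consensus_trajectory u" and \<gamma>: "0 < \<gamma>"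
    and coupling: "\<And>t i. t \<in> {0..T} \<Longrightarrow> i \<in> {2..N} \<Longrightarrow> \<gamma> \<le> (\<Sum>j\<in>{1..N} - {i}. W t i j)"
    and M: "\<And>k. k \<in> {1..N} \<Longrightarrow> u 0 k \<le> M"
    and i: "i \<in> {1..N}" and \<tau>: "\<tau> \<in> {0..T}"
  shows "u \<tau> i - u 0 1 \<le> (M - u 0 1) * erlang_survival \<gamma> (L i) \<tau>"
proof -
  define c where "c = u 0 1"
  have c: "c \<le> M"
    using M N_pos by (simp add: c_def)
  have "u \<tau> i - c \<le> (M - c) * erlang_survival \<gamma> (L i) \<tau>" using i \<tau>
  proof (induction "L i" arbitrary: i \<tau> rule: less_induct)
    case less
    show ?case
    proof (cases "i = 1")
      case True
      then have "L i = 0" "u \<tau> i = c"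
        using leader_level leader_constant[OF u, of \<tau>] less.prems by (auto simp: c_def)
      then show ?thesis by simp
    next
      case False
      then have i2: "i \<in> {2..N}" using less.prems by auto
      have "(\<Sum>j\<in>{1..N} - {i}. W \<tau> i j) \<noteq> 0"
        using coupling[OF less.prems(2) i2] \<gamma> by linarith
      then obtain j where "j \<in> {1..N} - {i}" "W \<tau> i j \<noteq> 0"
        by (meson sum.neutral)
      then have "L j < L i"
        using weight_level less.prems by auto
      then obtain k where k: "L i = Suc k"
        using less_imp_Suc_add by blast
      have "u \<tau> i - c \<le> (M - c) * erlang_survival \<gamma> (Suc k) \<tau>"
      proof (rule follower_upper_bound_step[OF u \<gamma> less.prems(1) _ _ _ c _ less.prems(2)])
        show "u 0 i \<le> M" using M less.prems by simp
        fix t j assume t: "t \<in> {0..T}" and j: "j \<in> {1..N}" "L j \<le> k"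
        then have "u t j - c \<le> (M - c) * erlang_survival \<gamma> (L j) t"
          using less.hyps k by simp
        also have "\<dots> \<le> (M - c) * erlang_survival \<gamma> k t"
          using c \<gamma> t j by (intro mult_left_mono erlang_survival_mono) auto
        finally show "u t j - c \<le> (M - c) * erlang_survival \<gamma> k t" .
      qed (use k coupling i2 in auto)
      then show ?thesis by (simp add: k)
    qed
  qed
  then show ?thesis by (simp add: c_def)
qed

lemma consensus_oscillation_bound:
  fixes u :: "real \<Rightarrow> nat \<Rightarrow> real"
  assumes u: "consensus_trajectory u" and \<gamma>: "0 < \<gamma>"
    and coupling: "\<And>t i. t \<in> {0..T} \<Longrightarrow> i \<in> {2..N} \<Longrightarrow> \<gamma> \<le> (\<Sum>j\<in>{1..N} - {i}. W t i j)"
    and levels: "\<And>i. i \<in> {1..N} \<Longrightarrow> L i \<le> H"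
    and bounds: "\<And>k. k \<in> {1..N} \<Longrightarrow> m \<le> u 0 k \<and> u 0 k \<le> M"
    and ij: "i \<in> {1..N}" "j \<in> {1..N}" and \<tau>: "\<tau> \<in> {0..T}"
  shows "u \<tau> i - u \<tau> j \<le> (M - m) * erlang_survival \<gamma> H \<tau>"
proof -
  define E where "E = erlang_survival \<gamma> H \<tau>"
  have mono: "erlang_survival \<gamma> (L k) \<tau> \<le> E" if "k \<in> {1..N}" for k
    unfolding E_def using \<gamma> \<tau> levels[OF that] by (intro erlang_survival_mono) auto
  have m1: "m \<le> u 0 1" and M1: "u 0 1 \<le> M"
    using bounds[of 1] N_pos by auto
  have "u \<tau> i - u 0 1 \<le> (M - u 0 1) * erlang_survival \<gamma> (L i) \<tau>"
    using consensus_upper_bound[OF u \<gamma> coupling _ ij(1) \<tau>] bounds by blast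
  also have "\<dots> \<le> (M - u 0 1) * E"
    using M1 mono[OF ij(1)] by (intro mult_left_mono) auto
  finally have upper: "u \<tau> i - u 0 1 \<le> (M - u 0 1) * E" .
  have "consensus_trajectory (\<lambda>t k. - u t k)"
    using consensus_trajectory_bounded_linear[OF bounded_linear_minus[OF bounded_linear_ident] u] .
  then have "- u \<tau> j - - u 0 1 \<le> (- m - - u 0 1) * erlang_survival \<gamma> (L j) \<tau>"
    by (rule consensus_upper_bound[where M = "- m", OF _ \<gamma> coupling _ ij(2) \<tau>]) (use bounds in auto)
  also have "\<dots> = (u 0 1 - m) * erlang_survival \<gamma> (L j) \<tau>"
    by simp
  also have "\<dots> \<le> (u 0 1 - m) * E"
    using m1 mono[OF ij(2)] by (intro mult_left_mono) auto
  finally have "u 0 1 - u \<tau> j \<le> (u 0 1 - m) * E" by simp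
  with upper show ?thesis
    by (simp add: E_def algebra_simps)
qed

lemma consensus_diam_decay:
  fixes v :: "real \<Rightarrow> nat \<Rightarrow> 'a::real_inner"
  assumes v: "consensus_trajectory v" and \<gamma>: "0 < \<gamma>"
    and coupling: "\<And>t i. t \<in> {0..T} \<Longrightarrow> i \<in> {2..N} \<Longrightarrow> \<gamma> \<le> (\<Sum>j\<in>{1..N} - {i}. W t i j)"
    and levels: "\<And>i. i \<in> {1..N} \<Longrightarrow> L i \<le> H"
    and \<tau>: "\<tau> \<in> {0..T}"
  shows "diam N (v \<tau>) \<le> diam N (v 0) * erlang_survival \<gamma> H \<tau>"
proof (rule diam_le[OF N_pos])
  fix i j assume ij: "i \<in> {1..N}" "j \<in> {1..N}"
  define e where "e = v \<tau> i - v \<tau> j"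
  define u where "u t k = e \<bullet> v t k" for t k
  have u: "consensus_trajectory u"
    unfolding u_def[abs_def] using bounded_linear_inner_right v by (rule consensus_trajectory_bounded_linear)
  have "Max (u 0 ` {1..N}) \<in> u 0 ` {1..N}" "Min (u 0 ` {1..N}) \<in> u 0 ` {1..N}"
    using N_pos by (intro Max_in Min_in; force)+
  then obtain a b where ab: "a \<in> {1..N}" "b \<in> {1..N}"
    and "u 0 a = Max (u 0 ` {1..N})" "u 0 b = Min (u 0 ` {1..N})"
    by auto
  then have bounds: "u 0 b \<le> u 0 k \<and> u 0 k \<le> u 0 a" if "k \<in> {1..N}" for k
    using that by simp
  have "norm e ^ 2 = u \<tau> i - u \<tau> j"
    by (simp add: u_def e_def power2_norm_eq_inner inner_diff_right)
  also have "\<dots> \<le> (u 0 a - u 0 b) * erlang_survival \<gamma> H \<tau>"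
    by (rule consensus_oscillation_bound[OF u \<gamma> coupling levels bounds ij \<tau>])
  also have "u 0 a - u 0 b \<le> norm e * diam N (v 0)"
  proof -
    have "u 0 a - u 0 b \<le> norm e * norm (v 0 a - v 0 b)"
      unfolding u_def inner_diff_right[symmetric] by (rule norm_cauchy_schwarz)
    also have "\<dots> \<le> norm e * diam N (v 0)"
      using ab by (intro mult_left_mono norm_le_diam) auto
    finally show ?thesis .
  qed
  then have "(u 0 a - u 0 b) * erlang_survival \<gamma> H \<tau> \<le> norm e * diam N (v 0) * erlang_survival \<gamma> H \<tau>"
    using \<gamma> \<tau> by (intro mult_right_mono erlang_survival_nonneg) auto
  finally have "norm e * norm e \<le> norm e * (diam N (v 0) * erlang_survival \<gamma> H \<tau>)"
    by (simp add: power2_eq_square mult.assoc)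
  moreover have "0 \<le> diam N (v 0) * erlang_survival \<gamma> H \<tau>"
    using \<gamma> \<tau> N_pos by (intro mult_nonneg_nonneg diam_nonneg erlang_survival_nonneg) auto
  ultimately show "norm (v \<tau> i - v \<tau> j) \<le> diam N (v 0) * erlang_survival \<gamma> H \<tau>"
    unfolding e_def[symmetric] by (cases "norm e = 0") (auto simp: mult_le_cancel_left_pos)
qed

lemma diam_le_of_coupling_bounded_below:
  fixes x v :: "real \<Rightarrow> nat \<Rightarrow> 'a::real_inner"
  assumes dx: "\<And>t i. 0 \<le> t \<Longrightarrow> i \<in> {1..N} \<Longrightarrow> ((\<lambda>s. x s i) has_vector_derivative v t i) (at t within {0..})"
    and v: "consensus_trajectory v" and \<gamma>: "0 < \<gamma>"
    and levels: "\<And>i. i \<in> {1..N} \<Longrightarrow> L i \<le> H"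
    and coupling: "\<And>t i. 0 \<le> t \<Longrightarrow> diam N (x t) \<le> r \<Longrightarrow> i \<in> {2..N} \<Longrightarrow>
        \<gamma> \<le> (\<Sum>j\<in>{1..N} - {i}. W t i j)"
    and small: "diam N (x 0) + H * diam N (v 0) / \<gamma> < r"
    and t: "0 \<le> t"
  shows "diam N (x t) \<le> diam N (x 0) + H * diam N (v 0) / \<gamma>"
proof -
  define R where "R = diam N (x 0) + H * diam N (v 0) / \<gamma>"
  have V0: "0 \<le> diam N (v 0)"
    using N_pos by (rule diam_nonneg)
  have confined: "diam N (x T) \<le> R" if T: "0 \<le> T" "\<forall>s\<in>{0..T}. diam N (x s) \<le> r" for T
  proof -
    have "diam N (v s) \<le> diam N (v 0) * erlang_survival \<gamma> H s" if "s \<in> {0..T}" for s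
    proof (rule consensus_diam_decay[OF v \<gamma> _ levels that])
      fix s' i assume "s' \<in> {0..T}" "i \<in> {2..N}"
      then show "\<gamma> \<le> (\<Sum>j\<in>{1..N} - {i}. W s' i j)"
        by (intro coupling) (use T in auto)
    qed
    then show ?thesis
      unfolding R_def using diam_le_of_velocity_decay[OF N_pos dx \<gamma> V0 _ T(1)] by simp
  qed
  have "R < r" "diam N (x 0) \<le> R"
    using small V0 \<gamma> by (simp_all add: R_def)
  have below: "diam N (x s) < r" if "0 \<le> s" for s
  proof (rule continuous_bootstrap[where \<phi> = "\<lambda>t. diam N (x t)", OF _ _ _ that])
    show "continuous_on {0..} (\<lambda>t. diam N (x t))"
      using N_pos
    proof (rule continuous_on_diam)
      fix i assume "i \<in> {1..N}"
      then show "continuous_on {0..} (\<lambda>t. x t i)"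
        by (intro continuous_on_vector_derivative[where f' = "\<lambda>t. v t i"] dx) auto
    qed
    show "diam N (x 0) < r"
      using \<open>R < r\<close> \<open>diam N (x 0) \<le> R\<close> by simp
    show "diam N (x T) < r" if "0 \<le> T" "\<forall>t\<in>{0..T}. diam N (x t) \<le> r" for T
      using confined[OF that] \<open>R < r\<close> by simp
  qed
  show ?thesis
    unfolding R_def[symmetric] using t below by (intro confined) (auto intro: less_imp_le)
qed

lemma flocks_if_coupling_bounded_below:
  fixes x v :: "real \<Rightarrow> nat \<Rightarrow> 'a::real_inner"
  assumes dx: "\<And>t i. 0 \<le> t \<Longrightarrow> i \<in> {1..N} \<Longrightarrow> ((\<lambda>s. x s i) has_vector_derivative v t i) (at t within {0..})"
    and v: "consensus_trajectory v" and \<gamma>: "0 < \<gamma>"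
    and levels: "\<And>i. i \<in> {1..N} \<Longrightarrow> L i \<le> H"
    and coupling: "\<And>t i. 0 \<le> t \<Longrightarrow> diam N (x t) \<le> r \<Longrightarrow> i \<in> {2..N} \<Longrightarrow>
        \<gamma> \<le> (\<Sum>j\<in>{1..N} - {i}. W t i j)"
    and small: "diam N (x 0) + H * diam N (v 0) / \<gamma> < r"
  shows "flocks N x v"
  unfolding flocks_def
proof
  define R where "R = diam N (x 0) + H * diam N (v 0) / \<gamma>"
  have confined: "diam N (x t) \<le> R" if "0 \<le> t" for t
    unfolding R_def using dx v \<gamma> levels coupling small that by (rule diam_le_of_coupling_bounded_below)
  then show "bdd_above ((\<lambda>t. diam N (x t)) ` {0..})"
    by (auto intro: bdd_aboveI[of _ R])
  have "R < r"
    using small by (simp add: R_def)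
  have "diam N (v t) \<le> diam N (v 0) * erlang_survival \<gamma> H t" if "0 \<le> t" for t
  proof (rule consensus_diam_decay[OF v \<gamma> _ levels])
    fix s i assume "s \<in> {0..t}" "i \<in> {2..N}"
    then show "\<gamma> \<le> (\<Sum>j\<in>{1..N} - {i}. W s i j)"
      using confined[of s] \<open>R < r\<close> by (intro coupling) auto
  qed (use that in auto)
  then have upper: "eventually (\<lambda>t. diam N (v t) \<le> diam N (v 0) * erlang_survival \<gamma> H t) at_top"
    by (auto intro: eventually_at_top_linorderI[of 0])
  have lower: "eventually (\<lambda>t. 0 \<le> diam N (v t)) at_top"
    using N_pos by (simp add: diam_nonneg)
  have "((\<lambda>t. diam N (v 0) * erlang_survival \<gamma> H t) \<longlongrightarrow> diam N (v 0) * 0) at_top"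
    by (intro tendsto_mult tendsto_const erlang_survival_tendsto_0 \<gamma>)
  then show "((\<lambda>t. diam N (v t)) \<longlongrightarrow> 0) at_top"
    using tendsto_sandwich[OF lower upper tendsto_const] by simp
qed

end

section \<open>Hierarchical leadership graphs\<close>

lemma finite_path_lengths: "finite {length p - 1 | p. is_path_to_1 A N i p}"
proof (rule finite_subset[of _ "{..N}"])
  have "length p - 1 \<le> N" if "is_path_to_1 A N i p" for p
  proof -
    have "length p = card (set p)"
      using that by (simp add: is_path_to_1_def distinct_card)
    also have "\<dots> \<le> card {1..N}"
      using that by (intro card_mono) (auto simp: is_path_to_1_def)
    finally show ?thesis by simp
  qed
  then show "{length p - 1 | p. is_path_to_1 A N i p} \<subseteq> {..N}" by auto
qed simp

lemma length_le_hlen: "is_path_to_1 A N i p \<Longrightarrow> length p - 1 \<le> hlen A N i"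
  unfolding hlen_def by (rule Max_ge[OF finite_path_lengths]) auto

lemma hlen_le_Hdepth: "i \<in> {2..N} \<Longrightarrow> hlen A N i \<le> Hdepth A N"
  unfolding Hdepth_def by (rule Max_ge) auto

lemma hlen_leader: "1 \<le> N \<Longrightarrow> hlen A N 1 = 0"
proof -
  assume "1 \<le> N"
  have "length p = 1" if "is_path_to_1 A N 1 p" for p
  proof (cases p)
    case (Cons a q)
    then show ?thesis
      using that last_in_set[of q] by (cases "q = []") (auto simp: is_path_to_1_def)
  qed (use that in \<open>simp add: is_path_to_1_def\<close>)
  moreover have "is_path_to_1 A N 1 [1]"
    using \<open>1 \<le> N\<close> by (simp add: is_path_to_1_def)
  ultimately have "{length p - 1 | p. is_path_to_1 A N 1 p} = {0}"
    by (auto intro!: exI[of _ "[1]"])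
  then show ?thesis by (simp add: hlen_def)
qed

locale hierarchical_leadership =
  fixes A :: "nat \<Rightarrow> nat \<Rightarrow> real" and N :: nat
  assumes A_nonneg: "\<And>i j. i \<in> {1..N} \<Longrightarrow> j \<in> {1..N} \<Longrightarrow> 0 \<le> A i j"
    and edge_descends: "\<And>i j. i \<in> {1..N} \<Longrightarrow> j \<in> {1..N} \<Longrightarrow> 0 < A i j \<Longrightarrow> j < i"
    and follower_has_superior: "\<And>i. i \<in> {2..N} \<Longrightarrow> \<exists>j\<in>{1..<i}. 0 < A i j"
begin

lemma path_to_1_le_start:
  assumes p: "is_path_to_1 A N i p"
  shows "k < length p \<Longrightarrow> p ! k \<le> i"
proof (induction k)
  case 0
  then show ?case using p by (auto simp: is_path_to_1_def hd_conv_nth)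
next
  case (Suc k)
  have "set p \<subseteq> {1..N}" "0 < A (p ! k) (p ! Suc k)"
    using p Suc.prems by (auto simp: is_path_to_1_def)
  moreover have "p ! k \<in> set p" "p ! Suc k \<in> set p"
    using Suc.prems by simp_all
  ultimately have "p ! k \<in> {1..N}" "p ! Suc k \<in> {1..N}" "0 < A (p ! k) (p ! Suc k)"
    by auto
  then show ?case
    using edge_descends Suc by fastforce
qed

lemma path_to_1_Cons:
  assumes p: "is_path_to_1 A N j p" and i: "i \<in> {1..N}" and Aij: "0 < A i j"
  shows "is_path_to_1 A N i (i # p)"
proof -
  have "p \<noteq> []" "hd p = j" "set p \<subseteq> {1..N}"
    using p by (auto simp: is_path_to_1_def)
  then have "j \<in> {1..N}"
    using hd_in_set by blast
  then have "j < i"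
    using edge_descends i Aij by blast
  then have "i \<notin> set p"
    using path_to_1_le_start[OF p] by (fastforce simp: in_set_conv_nth)
  have "(i # p) ! k \<noteq> (i # p) ! Suc k \<and> 0 < A ((i # p) ! k) ((i # p) ! Suc k)"
    if "Suc k < length (i # p)" for k
    using that p Aij \<open>j < i\<close> \<open>p \<noteq> []\<close> \<open>hd p = j\<close>
    by (cases k) (auto simp: is_path_to_1_def hd_conv_nth)
  then show ?thesis
    using p i \<open>i \<notin> set p\<close> \<open>p \<noteq> []\<close> unfolding is_path_to_1_def by auto
qed

lemma path_to_1_exists: "i \<in> {1..N} \<Longrightarrow> \<exists>p. is_path_to_1 A N i p"
proof (induction i rule: less_induct)
  case (less i)
  show ?case
  proof (cases "i = 1")
    case True
    then have "is_path_to_1 A N i [1]"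
      using less.prems by (auto simp: is_path_to_1_def)
    then show ?thesis by blast
  next
    case False
    then have "i \<in> {2..N}"
      using less.prems by auto
    then obtain j where j: "j \<in> {1..<i}" "0 < A i j"
      using follower_has_superior by blast
    then obtain p where "is_path_to_1 A N j p"
      using less.IH less.prems by fastforce
    then show ?thesis
      using path_to_1_Cons less.prems j(2) by blast
  qed
qed

lemma hlen_less_of_edge:
  assumes i: "i \<in> {1..N}" and j: "j \<in> {1..N}" and Aij: "0 < A i j"
  shows "hlen A N j < hlen A N i"
proof -
  have "hlen A N j \<in> {length p - 1 | p. is_path_to_1 A N j p}"
    unfolding hlen_def using path_to_1_exists[OF j] by (intro Max_in finite_path_lengths) auto
  then obtain p where p: "is_path_to_1 A N j p" "hlen A N j = length p - 1"
    by blast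
  then have "length (i # p) - 1 \<le> hlen A N i"
    using path_to_1_Cons[OF p(1) i Aij] by (intro length_le_hlen)
  moreover have "p \<noteq> []"
    using p by (simp add: is_path_to_1_def)
  ultimately show ?thesis
    using p(2) by (cases p) auto
qed

lemma row_sum_pos:
  assumes i: "i \<in> {2..N}"
  shows "0 < (\<Sum>j\<in>{1..N} - {i}. A i j)"
proof -
  obtain j where "j \<in> {1..<i}" "0 < A i j"
    using follower_has_superior[OF i] by blast
  then show ?thesis
    using i A_nonneg by (intro sum_pos2[of _ j]) auto
qed

lemma Hdepth_pos:
  assumes "2 \<le> N"
  shows "0 < Hdepth A N"
proof -
  have two: "2 \<in> {2..N}"
    using assms by simp
  then obtain j where "j \<in> {1..<2}" "0 < A 2 j"
    using follower_has_superior by blast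
  then have "hlen A N j < hlen A N 2"
    using assms by (intro hlen_less_of_edge) auto
  also have "\<dots> \<le> Hdepth A N"
    using two by (rule hlen_le_Hdepth)
  finally show ?thesis by simp
qed

lemma solution_flocks_if_coupling_bounded_below:
  fixes x v :: "real \<Rightarrow> nat \<Rightarrow> 'a::real_inner" and Q :: "real \<Rightarrow> nat \<Rightarrow> nat \<Rightarrow> real"
  assumes N: "1 \<le> N" and \<alpha>: "0 \<le> \<alpha>" and sol: "solves N \<alpha> Q x v"
    and Q_nonneg: "\<And>t i j. 0 \<le> t \<Longrightarrow> i \<in> {1..N} \<Longrightarrow> j \<in> {1..N} \<Longrightarrow> 0 \<le> Q t i j"
    and Q_support: "\<And>(t :: real) i j. A i j = 0 \<Longrightarrow> Q t i j = 0"
    and \<gamma>: "0 < \<gamma>"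
    and coupling: "\<And>t i. 0 \<le> t \<Longrightarrow> diam N (x t) \<le> r \<Longrightarrow> i \<in> {2..N} \<Longrightarrow>
        \<gamma> \<le> \<alpha> * (\<Sum>j\<in>{1..N} - {i}. Q t i j)"
    and small: "diam N (x 0) + Hdepth A N * diam N (v 0) / \<gamma> < r"
  shows "flocks N x v"
proof -
  interpret layered_coupling N "\<lambda>t i j. \<alpha> * Q t i j" "hlen A N"
  proof
    fix t :: real and i j assume t: "0 \<le> t" and ij: "i \<in> {1..N}" "j \<in> {1..N}"
    then show "0 \<le> \<alpha> * Q t i j"
      using \<alpha> Q_nonneg by simp
    assume "\<alpha> * Q t i j \<noteq> 0"
    then have "0 < A i j"
      using Q_support A_nonneg[OF ij] by force
    then show "hlen A N j < hlen A N i"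
      using ij by (rule hlen_less_of_edge[rotated 2])
  qed (use N hlen_leader in auto)
  show ?thesis
  proof (rule flocks_if_coupling_bounded_below[where \<gamma> = \<gamma> and r = r and H = "Hdepth A N"])
    show "((\<lambda>s. x s i) has_vector_derivative v t i) (at t within {0..})"
      if "0 \<le> t" "i \<in> {1..N}" for t i
      using sol that by (simp add: solves_def)
    show "consensus_trajectory v"
      using sol by (simp add: solves_def consensus_trajectory_def scaleR_sum_right)
    show "hlen A N i \<le> Hdepth A N" if "i \<in> {1..N}" for i
      using that hlen_le_Hdepth[of i N A] hlen_leader[OF N] by (cases "i = 1") auto
    show "\<gamma> \<le> (\<Sum>j\<in>{1..N} - {i}. \<alpha> * Q t i j)"
      if "0 \<le> t" "diam N (x t) \<le> r" "i \<in> {2..N}" for t i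
      using coupling[OF that] by (simp add: sum_distrib_left)
  qed (use \<gamma> small in simp_all)
qed

end

section \<open>Cucker--Smale and Motsch--Tadmor weights\<close>

lemma ex_less_of_ereal_less_mult_SUP:
  assumes k: "0 < k" and less: "ereal V < ereal k * (SUP r\<in>S. ereal (f r))"
  shows "\<exists>r\<in>S. V < k * f r"
proof (rule ccontr)
  assume "\<not> (\<exists>r\<in>S. V < k * f r)"
  then have "f r \<le> V / k" if "r \<in> S" for r
    using that k by (auto simp: not_less field_simps)
  then have "(SUP r\<in>S. ereal (f r)) \<le> ereal (V / k)"
    by (intro SUP_least) auto
  then have "ereal k * (SUP r\<in>S. ereal (f r)) \<le> ereal k * ereal (V / k)"
    using k by (intro ereal_mult_left_mono) auto
  also have "\<dots> = ereal V"
    using k by simp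
  finally show False
    using less by simp
qed

lemma divide_add_self_mono:
  fixes a m s :: real
  assumes "0 \<le> a" "0 < m" "m \<le> s"
  shows "m / (a + m) \<le> s / (a + s)"
proof -
  have "m * (a + s) \<le> s * (a + m)"
    using assms by (simp add: algebra_simps mult_left_mono)
  then show ?thesis
    using assms by (simp add: divide_simps)
qed

text \<open>The source of the factor (a + A_*) \<psi>(r) / (a + A_* \<psi>(r)) in the Motsch--Tadmor condition.\<close>

lemma normalized_weight_factor_le:
  fixes a a' S S' p :: real
  assumes a: "0 \<le> a" "a \<le> a'" and S: "0 < S'" "S' \<le> S" and p: "0 < p" "p \<le> 1"
  shows "S / (a + S) * ((a' + S') * p / (a' + S' * p)) \<le> S * p / (a + S * p)"
proof -
  have pos: "0 < a + S" "0 < a' + S' * p" "0 < a + S * p"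
    using assms by (auto intro: add_nonneg_pos)
  have "a * S' \<le> a' * S"
    using assms by (intro mult_mono) auto
  then have "0 \<le> (1 - p) * (a' * S - a * S')"
    using p by simp
  also have "(1 - p) * (a' * S - a * S') = (a + S) * (a' + S' * p) - (a' + S') * (a + S * p)"
    by (simp add: algebra_simps)
  finally have "(a' + S') * (a + S * p) \<le> (a + S) * (a' + S' * p)"
    by simp
  then have "(a' + S') / ((a + S) * (a' + S' * p)) \<le> 1 / (a + S * p)"
    using pos by (simp add: divide_simps)
  then have "S * p * ((a' + S') / ((a + S) * (a' + S' * p))) \<le> S * p * (1 / (a + S * p))"
    using S p by (intro mult_left_mono) auto
  then show ?thesis
    by (simp add: field_simps)
qed

lemma Astar_le: "i \<in> {2..N} \<Longrightarrow> Astar A N \<le> (\<Sum>j\<in>{1..N} - {i}. A i j)"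
  unfolding Astar_def by (rule Min_le) auto

lemma Bstar_le: "i \<in> {2..N} \<Longrightarrow> Bstar A a N \<le> (\<Sum>j\<in>{1..N} - {i}. Bmat A a N i j)"
  unfolding Bstar_def by (rule Min_le) auto

lemma abar_ge: "i \<in> {2..N} \<Longrightarrow> a i \<le> abar a N"
  unfolding abar_def by (rule Max_ge) auto

lemma sum_Bmat: "(\<Sum>j\<in>{1..N} - {i}. Bmat A a N i j) = (\<Sum>j\<in>{1..N} - {i}. A i j) / (a i + (\<Sum>j\<in>{1..N} - {i}. A i j))"
  by (simp add: Bmat_def sum_divide_distrib)

locale hierarchical_flocking = hierarchical_leadership A N
  for A :: "nat \<Rightarrow> nat \<Rightarrow> real" and N :: nat +
  fixes \<alpha> :: real and \<psi> :: "real \<Rightarrow> real"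
  assumes two_agents: "2 \<le> N" and alpha_pos: "0 < \<alpha>"
    and psi_pos: "\<And>r. 0 \<le> r \<Longrightarrow> 0 < \<psi> r" and psi_le_1: "\<And>r. 0 \<le> r \<Longrightarrow> \<psi> r \<le> 1"
    and psi_antimono: "\<And>r s. 0 \<le> r \<Longrightarrow> r \<le> s \<Longrightarrow> \<psi> s \<le> \<psi> r"
begin

lemma Astar_pos: "0 < Astar A N"
proof -
  have "Astar A N \<in> (\<lambda>i. \<Sum>j\<in>{1..N} - {i}. A i j) ` {2..N}"
    unfolding Astar_def using two_agents by (intro Min_in) auto
  then show ?thesis
    using row_sum_pos by auto
qed

lemma Bstar_pos:
  assumes a: "\<forall>i\<in>{1..N}. 0 \<le> a i"
  shows "0 < Bstar A a N"
proof -
  have "Bstar A a N \<in> (\<lambda>i. \<Sum>j\<in>{1..N} - {i}. Bmat A a N i j) ` {2..N}"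
    unfolding Bstar_def using two_agents by (intro Min_in) auto
  moreover have "0 < (\<Sum>j\<in>{1..N} - {i}. Bmat A a N i j)" if "i \<in> {2..N}" for i
    unfolding sum_Bmat using row_sum_pos[OF that] a that by (intro divide_pos_pos add_nonneg_pos) auto
  ultimately show ?thesis
    by auto
qed

lemma row_sum_psi_le:
  fixes y :: "nat \<Rightarrow> 'a::real_normed_vector"
  assumes i: "i \<in> {2..N}" and y: "diam N y \<le> r"
  shows "(\<Sum>j\<in>{1..N} - {i}. A i j) * \<psi> r \<le> (\<Sum>j\<in>{1..N} - {i}. A i j * \<psi> (norm (y i - y j)))"
  unfolding sum_distrib_right
proof (rule sum_mono)
  fix j assume j: "j \<in> {1..N} - {i}"
  have "norm (y i - y j) \<le> r"
    using norm_le_diam[of i N j y] i j y by auto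
  then have "\<psi> r \<le> \<psi> (norm (y i - y j))"
    by (intro psi_antimono) auto
  then show "A i j * \<psi> r \<le> A i j * \<psi> (norm (y i - y j))"
    using A_nonneg i j by (intro mult_left_mono) auto
qed

lemma flocks_if_initial_velocity_small:
  fixes x v :: "real \<Rightarrow> nat \<Rightarrow> 'a::real_inner" and Q :: "real \<Rightarrow> nat \<Rightarrow> nat \<Rightarrow> real"
  assumes sol: "solves N \<alpha> Q x v"
    and Q_nonneg: "\<And>t i j. 0 \<le> t \<Longrightarrow> i \<in> {1..N} \<Longrightarrow> j \<in> {1..N} \<Longrightarrow> 0 \<le> Q t i j"
    and Q_support: "\<And>(t :: real) i j. A i j = 0 \<Longrightarrow> Q t i j = 0"
    and \<kappa>: "0 < \<kappa>" and g_pos: "\<And>r. diam N (x 0) \<le> r \<Longrightarrow> 0 < g r"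
    and coupling: "\<And>r t i. diam N (x 0) \<le> r \<Longrightarrow> 0 \<le> t \<Longrightarrow> diam N (x t) \<le> r \<Longrightarrow> i \<in> {2..N} \<Longrightarrow>
        \<kappa> * g r \<le> (\<Sum>j\<in>{1..N} - {i}. Q t i j)"
    and small: "ereal (diam N (v 0)) < ereal (\<alpha> * \<kappa> / real (Hdepth A N)) *
        (SUP r\<in>{diam N (x 0)..}. ereal ((r - diam N (x 0)) * g r))"
  shows "flocks N x v"
proof -
  define H where "H = real (Hdepth A N)"
  have H: "0 < H"
    using Hdepth_pos two_agents by (simp add: H_def)
  obtain r where r: "diam N (x 0) \<le> r" "diam N (v 0) < \<alpha> * \<kappa> / H * ((r - diam N (x 0)) * g r)"
    using ex_less_of_ereal_less_mult_SUP[OF _ small] alpha_pos \<kappa> H by (auto simp: H_def)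
  define \<gamma> where "\<gamma> = \<alpha> * \<kappa> * g r"
  have \<gamma>: "0 < \<gamma>"
    using alpha_pos \<kappa> g_pos[OF r(1)] by (simp add: \<gamma>_def)
  show ?thesis
  proof (rule solution_flocks_if_coupling_bounded_below[where \<gamma> = \<gamma> and r = r, OF _ _ sol Q_nonneg Q_support \<gamma>])
    show "1 \<le> N" "0 \<le> \<alpha>"
      using two_agents alpha_pos by auto
    show "\<gamma> \<le> \<alpha> * (\<Sum>j\<in>{1..N} - {i}. Q t i j)"
      if "0 \<le> t" "diam N (x t) \<le> r" "i \<in> {2..N}" for t i
      unfolding \<gamma>_def mult.assoc using coupling[OF r(1) that] alpha_pos by (intro mult_left_mono) auto
    have "H * diam N (v 0) < \<gamma> * (r - diam N (x 0))"
      using r(2) H by (simp add: \<gamma>_def field_simps)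
    then show "diam N (x 0) + Hdepth A N * diam N (v 0) / \<gamma> < r"
      using \<gamma> by (simp add: H_def field_simps)
  qed
qed

lemma cucker_smale_row_sum_ge:
  fixes x :: "real \<Rightarrow> nat \<Rightarrow> 'a::real_normed_vector"
  assumes i: "i \<in> {2..N}" and x: "diam N (x t) \<le> r" and r: "0 \<le> r"
  shows "Astar A N * \<psi> r \<le> (\<Sum>j\<in>{1..N} - {i}. Q_CS A \<psi> x t i j)"
proof -
  have "Astar A N * \<psi> r \<le> (\<Sum>j\<in>{1..N} - {i}. A i j) * \<psi> r"
    using Astar_le[OF i] psi_pos[OF r] by (intro mult_right_mono) auto
  also have "\<dots> \<le> (\<Sum>j\<in>{1..N} - {i}. A i j * \<psi> (norm (x t i - x t j)))"
    using i x by (rule row_sum_psi_le)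
  also have "\<dots> = (\<Sum>j\<in>{1..N} - {i}. Q_CS A \<psi> x t i j)"
    by (simp add: Q_CS_def norm_minus_commute)
  finally show ?thesis .
qed

lemma cucker_smale_flocking:
  fixes x v :: "real \<Rightarrow> nat \<Rightarrow> 'a::real_inner"
  assumes sol: "solves N \<alpha> (Q_CS A \<psi> x) x v"
    and small: "ereal (diam N (v 0)) < ereal (\<alpha> * Astar A N / real (Hdepth A N)) *
        (SUP r\<in>{diam N (x 0)..}. ereal ((r - diam N (x 0)) * \<psi> r))"
  shows "flocks N x v"
proof (rule flocks_if_initial_velocity_small[where \<kappa> = "Astar A N" and g = \<psi>, OF sol _ _ Astar_pos _ _ small])
  show "0 \<le> Q_CS A \<psi> x t i j" if "0 \<le> t" "i \<in> {1..N}" "j \<in> {1..N}" for t i j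
    using A_nonneg[of i j] psi_pos[of "norm (x t j - x t i)"] that by (simp add: Q_CS_def)
  show "Q_CS A \<psi> x t i j = 0" if "A i j = 0" for t :: real and i j
    using that by (simp add: Q_CS_def)
  show "0 < \<psi> r" if "diam N (x 0) \<le> r" for r
    using that diam_nonneg[of N "x 0"] two_agents by (intro psi_pos) simp
  show "Astar A N * \<psi> r \<le> (\<Sum>j\<in>{1..N} - {i}. Q_CS A \<psi> x t i j)"
    if "diam N (x 0) \<le> r" "0 \<le> t" "diam N (x t) \<le> r" "i \<in> {2..N}" for r t i
    using that diam_nonneg[of N "x 0"] two_agents by (intro cucker_smale_row_sum_ge) auto
qed

lemma abar_nonneg:
  assumes "\<forall>i\<in>{1..N}. 0 \<le> a i"
  shows "0 \<le> abar a N"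
proof -
  have "0 \<le> a 2" "a 2 \<le> abar a N"
    using assms two_agents by (auto intro: abar_ge)
  then show ?thesis
    by linarith
qed

lemma motsch_tadmor_factor_pos:
  assumes "\<forall>i\<in>{1..N}. 0 \<le> a i" "0 \<le> r"
  shows "0 < (abar a N + Astar A N) * \<psi> r / (abar a N + Astar A N * \<psi> r)"
  using assms abar_nonneg Astar_pos psi_pos[of r]
  by (intro divide_pos_pos mult_pos_pos add_nonneg_pos) auto

lemma motsch_tadmor_row_sum_ge:
  fixes x :: "real \<Rightarrow> nat \<Rightarrow> 'a::real_normed_vector"
  assumes a: "\<forall>k\<in>{1..N}. 0 \<le> a k" and i: "i \<in> {2..N}" and x: "diam N (x t) \<le> r" and r: "0 \<le> r"
  shows "Bstar A a N * ((abar a N + Astar A N) * \<psi> r / (abar a N + Astar A N * \<psi> r))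
    \<le> (\<Sum>j\<in>{1..N} - {i}. Q_MT A a N \<psi> x t i j)"
proof -
  define S where "S = (\<Sum>k\<in>{1..N} - {i}. A i k * \<psi> (norm (x t i - x t k)))"
  define Ai where "Ai = (\<Sum>j\<in>{1..N} - {i}. A i j)"
  have psi_r: "0 < \<psi> r" "\<psi> r \<le> 1"
    using r psi_pos psi_le_1 by auto
  have ai: "0 \<le> a i" "a i \<le> abar a N"
    using a abar_ge[OF i] i by auto
  have Ai: "Astar A N \<le> Ai"
    using Astar_le[OF i] by (simp add: Ai_def)
  have "Bstar A a N * ((abar a N + Astar A N) * \<psi> r / (abar a N + Astar A N * \<psi> r))
      \<le> Ai / (a i + Ai) * ((abar a N + Astar A N) * \<psi> r / (abar a N + Astar A N * \<psi> r))"
    using Bstar_le[OF i, of A a] motsch_tadmor_factor_pos[OF a r]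
    unfolding sum_Bmat Ai_def by (intro mult_right_mono) auto
  also have "\<dots> \<le> Ai * \<psi> r / (a i + Ai * \<psi> r)"
    using ai Ai Astar_pos psi_r by (intro normalized_weight_factor_le) auto
  also have "\<dots> \<le> S / (a i + S)"
    using ai Ai Astar_pos psi_r row_sum_psi_le[OF i x]
    by (intro divide_add_self_mono) (auto simp: S_def Ai_def)
  also have "\<dots> = (\<Sum>j\<in>{1..N} - {i}. Q_MT A a N \<psi> x t i j)"
    by (simp add: Q_MT_def S_def sum_divide_distrib)
  finally show ?thesis .
qed

lemma motsch_tadmor_flocking:
  fixes a :: "nat \<Rightarrow> real" and x v :: "real \<Rightarrow> nat \<Rightarrow> 'a::real_inner"
  assumes a: "\<forall>i\<in>{1..N}. 0 \<le> a i" and sol: "solves N \<alpha> (Q_MT A a N \<psi> x) x v"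
    and small: "ereal (diam N (v 0)) < ereal (\<alpha> * Bstar A a N / real (Hdepth A N)) *
        (SUP r\<in>{diam N (x 0)..}. ereal ((r - diam N (x 0)) *
           ((abar a N + Astar A N) * \<psi> r) / (abar a N + Astar A N * \<psi> r)))"
  shows "flocks N x v"
proof (rule flocks_if_initial_velocity_small[where \<kappa> = "Bstar A a N"
      and g = "\<lambda>r. (abar a N + Astar A N) * \<psi> r / (abar a N + Astar A N * \<psi> r)",
      OF sol _ _ Bstar_pos[OF a]])
  show "0 \<le> Q_MT A a N \<psi> x t i j" if "0 \<le> t" "i \<in> {1..N}" "j \<in> {1..N}" for t i j
    unfolding Q_MT_def using A_nonneg psi_pos a that
    by (intro divide_nonneg_nonneg add_nonneg_nonneg sum_nonneg mult_nonneg_nonneg) (auto intro: less_imp_le)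
  show "Q_MT A a N \<psi> x t i j = 0" if "A i j = 0" for t :: real and i j
    using that by (simp add: Q_MT_def)
  show "0 < (abar a N + Astar A N) * \<psi> r / (abar a N + Astar A N * \<psi> r)"
    if "diam N (x 0) \<le> r" for r
    using that diam_nonneg[of N "x 0"] two_agents by (intro motsch_tadmor_factor_pos a) simp
  show "ereal (diam N (v 0)) < ereal (\<alpha> * Bstar A a N / real (Hdepth A N)) *
      (SUP r\<in>{diam N (x 0)..}. ereal ((r - diam N (x 0)) *
         ((abar a N + Astar A N) * \<psi> r / (abar a N + Astar A N * \<psi> r))))"
    using small by simp
  show "Bstar A a N * ((abar a N + Astar A N) * \<psi> r / (abar a N + Astar A N * \<psi> r))
      \<le> (\<Sum>j\<in>{1..N} - {i}. Q_MT A a N \<psi> x t i j)"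
    if "diam N (x 0) \<le> r" "0 \<le> t" "diam N (x t) \<le> r" "i \<in> {2..N}" for r t i
    using that diam_nonneg[of N "x 0"] two_agents by (intro motsch_tadmor_row_sum_ge a) auto
qed

lemma motsch_tadmor_unconditional:
  fixes a :: "nat \<Rightarrow> real" and x v :: "real \<Rightarrow> nat \<Rightarrow> 'a::real_inner"
  assumes a: "\<forall>i\<in>{1..N}. 0 \<le> a i" and abar: "abar a N = 0"
    and sol: "solves N \<alpha> (Q_MT A a N \<psi> x) x v"
  shows "flocks N x v"
proof (rule motsch_tadmor_flocking[OF a sol])
  define X0 where "X0 = diam N (x 0)"
  define V0 where "V0 = diam N (v 0)"
  define k where "k = \<alpha> * Bstar A a N / real (Hdepth A N)"
  have k: "0 < k"
    using alpha_pos Bstar_pos[OF a] Hdepth_pos two_agents by (simp add: k_def)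
  have X0: "0 \<le> X0" and V0: "0 \<le> V0"
    using two_agents by (simp_all add: X0_def V0_def diam_nonneg)
  define r where "r = X0 + V0 / k + 1"
  have r: "X0 \<le> r"
    using V0 k by (simp add: r_def)
  have "(r - X0) * ((abar a N + Astar A N) * \<psi> r) / (abar a N + Astar A N * \<psi> r) = r - X0"
    using abar Astar_pos psi_pos[of r] r X0 by simp
  moreover have "V0 < k * (r - X0)"
    using k by (simp add: r_def field_simps)
  ultimately have "ereal V0 < ereal k * ereal ((r - X0) * ((abar a N + Astar A N) * \<psi> r) /
      (abar a N + Astar A N * \<psi> r))"
    by simp
  also have "\<dots> \<le> ereal k * (SUP r\<in>{X0..}. ereal ((r - X0) * ((abar a N + Astar A N) * \<psi> r) /
      (abar a N + Astar A N * \<psi> r)))"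
    using k r by (intro ereal_mult_left_mono SUP_upper) auto
  finally show "ereal (diam N (v 0)) < ereal (\<alpha> * Bstar A a N / real (Hdepth A N)) *
      (SUP r\<in>{diam N (x 0)..}. ereal ((r - diam N (x 0)) *
         ((abar a N + Astar A N) * \<psi> r) / (abar a N + Astar A N * \<psi> r)))"
    by (simp add: X0_def V0_def k_def)
qed

end

theorem theorem3p9:
  fixes N :: nat and \<alpha> :: real and A :: "nat \<Rightarrow> nat \<Rightarrow> real" and \<psi> :: "real \<Rightarrow> real"
  assumes N2: "N \<ge> 2"
    and alpha_pos: "\<alpha> > 0"
    and A_nonneg: "\<forall>i\<in>{1..N}. \<forall>j\<in>{1..N}. A i j \<ge> 0"
    and psi_mono: "\<forall>r1\<ge>0. \<forall>r2\<ge>0. (r1 - r2) * (\<psi> r1 - \<psi> r2) \<le> 0"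
    and psi_bounds: "\<forall>r\<ge>0. 0 < \<psi> r \<and> \<psi> r \<le> \<psi> 0" and psi0: "\<psi> 0 \<le> 1"
    and HL1: "\<forall>i\<in>{1..N}. \<forall>j\<in>{1..N}. A i j > 0 \<longrightarrow> j < i"
    and HL2: "\<forall>i\<in>{2..N}. \<exists>j\<in>{1..<i}. A i j > 0"
  shows
    "(\<forall>(x :: real \<Rightarrow> nat \<Rightarrow> real ^ 'd) v.
        solves N \<alpha> (Q_CS A \<psi> x) x v \<longrightarrow>
        ereal (diam N (v 0)) < ereal (\<alpha> * Astar A N / real (Hdepth A N)) *
            (SUP r\<in>{diam N (x 0)..}. ereal ((r - diam N (x 0)) * \<psi> r)) \<longrightarrow>
        flocks N x v)
   \<and> (\<forall>a :: nat \<Rightarrow> real. (\<forall>i\<in>{1..N}. a i \<ge> 0) \<longrightarrow>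
        (\<forall>i\<in>{1..N}. (\<forall>j\<in>{1..N} - {i}. A i j = 0) \<longrightarrow> a i > 0) \<longrightarrow>
        (\<forall>(x :: real \<Rightarrow> nat \<Rightarrow> real ^ 'd) v.
          solves N \<alpha> (Q_MT A a N \<psi> x) x v \<longrightarrow>
          ereal (diam N (v 0)) < ereal (\<alpha> * Bstar A a N / real (Hdepth A N)) *
            (SUP r\<in>{diam N (x 0)..}. ereal ((r - diam N (x 0)) *
               ((abar a N + Astar A N) * \<psi> r) / (abar a N + Astar A N * \<psi> r))) \<longrightarrow>
          flocks N x v)
        \<and> (abar a N = 0 \<longrightarrow>
            (\<forall>(x :: real \<Rightarrow> nat \<Rightarrow> real ^ 'd) v. solves N \<alpha> (Q_MT A a N \<psi> x) x v \<longrightarrow> flocks N x v)))"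
proof -
  have psi_antimono: "\<psi> s \<le> \<psi> r" if "0 \<le> r" "r \<le> s" for r s
    using psi_mono[rule_format, of r s] that by (cases "r = s") (auto simp: mult_le_0_iff)
  interpret hierarchical_flocking A N \<alpha> \<psi>
    using N2 alpha_pos A_nonneg HL1 HL2 psi_bounds psi0 psi_antimono
    by unfold_locales force+
  txt \<open>The hypothesis \<open>a i > 0\<close> on rows without neighbours only makes the Motsch--Tadmor
    weights well defined.\<close>
  show ?thesis
    using cucker_smale_flocking motsch_tadmor_flocking motsch_tadmor_unconditional by blast
qed

end
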